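(* For the coprime hider strategy $y$ and every $v\in V\setminus\{1\}$, $y(C(T_v))\le h/w$.
   Context: $G$ is the path graph with $V=\{0,\dots,n-1\}$ and edges $\{v,v+1\}$; $k\ge2$, $n>2^k$, $c=2^k-2$ with $\gcd(c,n-1)=1$; $h,w$ are the positive integers with $h(n-1)-wc=1$ and $w\in\{1,\dots,n-2\}$ minimal. A search strategy for a tree $H$ is a rooted binary tree defined recursively: a single node is a search strategy for any $H$; otherwise the root is labeled with an edge $uv$ of $H$ and its two child subtrees are search strategies for the components $H_u,H_v$ of $H-uv$ containing $u,v$. Nodes get vertex sets: the root gets $V(H)$, the children of a root labeled $uv$ get $V(H_u),V(H_v)$, recursively. $C(T)$ is the set of $v$ with $V(\lambda)=\{v\}$ for a leaf $\lambda$; $\mathcal{T}_k$ is the set of search strategies of height at most $k$. $[u\oplus\ell]=\{w\bmod n: u\le w\le u+\ell-1\}$, $[a,b]=\{a,\dots,b\}$. For $v\in V\setminus\{1\}$, $T_v\in\mathcal{T}_k$ is any strategy with $C(T_v)=[v\oplus(c+1)]$ if this interval meets $\{0,n-1\}$ and $C(T_v)=[v\oplus c]$ otherwise. $y(S)=\sum_{i\in S}y_i$. Coprime hider strategy: $g(v)=v\frac{h}{wc}$, $r=\lfloor c/h\rfloor$; $y_0=y_{n-1}=0$; starting at $v=1$, repeatedly choose the largest $r^*\in\{r,r+1\}$ with $g(v+r^*-1)\le y([1,v-1])+\frac1w$, set $y_i=\frac{1}{r^*w}$ for $i\in\{v,\dots,v+r^*-1\}$, replace $v$ by $v+r^*$;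 stop when $v>n-2$. *)

theory Defs
  imports Complex_Main
begin

definition cyc_interval :: "nat \<Rightarrow> nat \<Rightarrow> nat \<Rightarrow> nat set" where
  "cyc_interval n u l = {x mod n | x. u \<le> x \<and> x + 1 \<le> u + l}"

definition CT :: "nat \<Rightarrow> nat \<Rightarrow> nat \<Rightarrow> nat set" where
  "CT n c v = (if cyc_interval n v (c + 1) \<inter> {0, n - 1} \<noteq> {}
               then cyc_interval n v (c + 1) else cyc_interval n v c)"

definition gfun :: "nat \<Rightarrow> nat \<Rightarrow> nat \<Rightarrow> nat \<Rightarrow> real" where
  "gfun c h w v = real v * real h / (real w * real c)"

definition rstar :: "nat \<Rightarrow> nat \<Rightarrow> nat \<Rightarrow> nat \<Rightarrow> real \<Rightarrow> nat" where
  "rstar c h w v S =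
     (let r = nat \<lfloor>real c / real h\<rfloor> in
      if gfun c h w (v + (r + 1) - 1) \<le> S + 1 / real w then r + 1 else r)"

text \<open>State after j blocks of the greedy procedure: (current v, y([1,v-1])).\<close>
fun hrun :: "nat \<Rightarrow> nat \<Rightarrow> nat \<Rightarrow> nat \<Rightarrow> nat \<times> real" where
  "hrun c h w 0 = (1, 0)"
| "hrun c h w (Suc j) =
     (let (v, S) = hrun c h w j; rs = rstar c h w v S
      in (v + rs, S + (\<Sum>i\<in>{v..<v + rs}. 1 / (real rs * real w))))"

text \<open>Block j is actually created iff its start v satisfies v <= n-2 (stop when v > n-2).\<close>
definition block_of :: "nat \<Rightarrow> nat \<Rightarrow> nat \<Rightarrow> nat \<Rightarrow> nat \<Rightarrow> nat \<Rightarrow> bool" where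
  "block_of n c h w i j =
     (let (v, S) = hrun c h w j in v \<le> n - 2 \<and> v \<le> i \<and> i < v + rstar c h w v S)"

definition hider_y :: "nat \<Rightarrow> nat \<Rightarrow> nat \<Rightarrow> nat \<Rightarrow> nat \<Rightarrow> real" where
  "hider_y n c h w i =
     (if 1 \<le> i \<and> i \<le> n - 2 \<and> (\<exists>j. block_of n c h w i j)
      then (let j = (SOME j. block_of n c h w i j);
                (v, S) = hrun c h w j
            in 1 / (real (rstar c h w v S) * real w))
      else 0)"

end

theory Submission
  imports Defs
begin

(* The j-th block built by the greedy procedure is (cut j, cut (j + 1)] with
   cut j = floor (j c / h), so every block has length r or r + 1 and total weight 1/w.
   Since cut (j + h) = cut j + c, the weights are c-periodic on the inner vertices and
   every window of c consecutive inner vertices carries exactly h/w. A set C(T_v) that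
   does not wrap around is such a window plus possibly an end vertex of weight 0.
   A wrapping set consists of [1, a - 1] and the translate of [a, c - 1] by
   L = n - 1 - c, where a = v + c + 1 - n. As L h = (w - h) c + 1, translation by L maps
   block j to block j + w - h, which is at least as long; hence the translated vertices
   are pointwise no heavier than the original ones, except possibly the last k <= r of
   them. Those weigh at most k/(r w) in total, whereas [c - k, c] weighs at least
   (k + 1)/((r + 1) w), so the wrapping set weighs at most y([1, c]) = h/w. *)

lemma div_pred_eq_div:
  fixes x d :: nat
  assumes "\<not> d dvd x"
  shows "(x - 1) div d = x div d"
proof -
  have "x = Suc (x - 1)" using assms by (cases x) auto
  then show ?thesis using assms div_Suc[of "x - 1" d] by (metis mod_eq_0_iff_dvd)
qed

lemma sum_periodic_window:
  fixes f :: "nat \<Rightarrow> 'a::cancel_comm_monoid_add"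
  assumes periodic: "\<And>i. a \<le> i \<Longrightarrow> f (i + p) = f i" and "a \<le> v"
  shows "(\<Sum>i\<in>{v..<v + p}. f i) = (\<Sum>i\<in>{a..<a + p}. f i)"
  using \<open>a \<le> v\<close>
proof (induction v rule: dec_induct)
  case (step v)
  have "f v + (\<Sum>i\<in>{Suc v..<Suc v + p}. f i) = (\<Sum>i\<in>{v..<Suc v + p}. f i)"
    using sum.atLeast_Suc_lessThan[of v "Suc v + p" f] by simp
  also have "\<dots> = (\<Sum>i\<in>{v..<v + p}. f i) + f (v + p)"
    by (simp add: sum.atLeastLessThan_Suc)
  also have "\<dots> = f v + (\<Sum>i\<in>{v..<v + p}. f i)"
    using periodic[OF step.hyps(1)] by (simp add: add.commute)
  finally show ?case using step.IH by simp
qed simp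

lemma cyc_interval_image: "cyc_interval n u l = (\<lambda>x. x mod n) ` {u..<u + l}"
  unfolding cyc_interval_def by auto

lemma cyc_interval_eq:
  assumes "u + l \<le> n"
  shows "cyc_interval n u l = {u..<u + l}"
  using assms by (force simp: cyc_interval_def)

lemma cyc_interval_subset_wrap:
  assumes "u < n" "l \<le> n"
  shows "cyc_interval n u l \<subseteq> {u..<n} \<union> {..<u + l - n}"
proof
  fix y assume "y \<in> cyc_interval n u l"
  then obtain x where x: "y = x mod n" "u \<le> x" "x < u + l" by (auto simp: cyc_interval_image)
  show "y \<in> {u..<n} \<union> {..<u + l - n}"
  proof (cases "x < n")
    case False
    then have "x mod n = x - n" using x assms by (simp add: mod_if)
    then show ?thesis using x False by auto
  qed (use x in simp)
qed

lemma gfun_le_iff: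
  assumes "0 < w" "0 < c"
  shows "gfun c h w x \<le> real k / real w \<longleftrightarrow> x * h \<le> k * c"
proof -
  have "gfun c h w x \<le> real k / real w \<longleftrightarrow> real (x * h) \<le> real (k * c)"
    using assms by (simp add: gfun_def field_simps)
  then show ?thesis by (simp only: of_nat_le_iff)
qed

lemma CT_subset: "CT n c v \<subseteq> cyc_interval n v (Suc c)"
  unfolding CT_def cyc_interval_image by auto

lemma CT_subset_window:
  assumes "1 \<le> v" "v + c < n"
  shows "CT n c v \<subseteq> {v..<v + c} \<union> {n - 1}"
proof -
  have "cyc_interval n v c = {v..<v + c}" "cyc_interval n v (c + 1) = {v..<v + c + 1}"
    using assms by (simp_all add: cyc_interval_eq)
  then show ?thesis using assms by (auto simp: CT_def)
qed

locale floor_blocks =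
  fixes c h :: nat
  assumes h_pos: "0 < h" and h_less_c: "h < c" and coprime_h_c: "coprime h c"
begin

definition r :: nat where "r = c div h"
definition cut :: "nat \<Rightarrow> nat" where "cut j = j * c div h"
definition block_len :: "nat \<Rightarrow> nat" where "block_len j = cut (Suc j) - cut j"
definition block_idx :: "nat \<Rightarrow> nat" where "block_idx i = (i * h - 1) div c"
definition weight :: "nat \<Rightarrow> real" where "weight i = 1 / real (block_len (block_idx i))"

lemma c_pos: "0 < c"
  using h_pos h_less_c by simp

lemma r_pos: "0 < r"
  using h_pos h_less_c by (simp add: r_def div_greater_zero_iff)

lemma c_less_Suc_r_mult: "c < Suc r * h"
  using mod_less_divisor[OF h_pos, of c] div_mult_mod_eq[of c h] unfolding r_def mult_Suc by linarith

lemma cut_le_iff: "i \<le> cut j \<longleftrightarrow> i * h \<le> j * c"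
  using h_pos by (simp add: cut_def less_eq_div_iff_mult_less_eq)

lemma cut_mono: "j \<le> j' \<Longrightarrow> cut j \<le> cut j'"
  by (simp add: cut_def div_le_mono)

lemma cut_0 [simp]: "cut 0 = 0"
  by (simp add: cut_def)

lemma cut_h: "cut h = c"
  using h_pos by (simp add: cut_def)

lemma cut_add_h: "cut (j + h) = cut j + c"
proof -
  have "(j + h) * c = j * c + c * h" by (simp add: algebra_simps)
  then show ?thesis using h_pos by (simp add: cut_def)
qed

lemma block_len_bounds: "r \<le> block_len j" "block_len j \<le> Suc r"
proof -
  have "cut (Suc j) = cut j + r + (j * c mod h + c mod h) div h"
    using div_add1_eq[of "j * c" c h] by (simp add: cut_def r_def add.commute)
  moreover have "(j * c mod h + c mod h) div h < 2"
    using mod_less_divisor[OF h_pos, of "j * c"] mod_less_divisor[OF h_pos, of c]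
    by (intro less_mult_imp_div_less) linarith
  ultimately show "r \<le> block_len j" "block_len j \<le> Suc r"
    by (auto simp: block_len_def)
qed

lemma block_len_pos: "0 < block_len j"
  using r_pos block_len_bounds(1) by (rule less_le_trans)

lemma block_len_add_h: "block_len (j + h) = block_len j"
  using cut_add_h[of j] cut_add_h[of "Suc j"] by (simp add: block_len_def)

lemma block_idx_iff:
  assumes "1 \<le> i"
  shows "cut j < i \<and> i \<le> cut (Suc j) \<longleftrightarrow> block_idx i = j"
proof -
  have "1 \<le> i * h"
    using assms h_pos by simp
  then have "cut j < i \<longleftrightarrow> j * c \<le> i * h - 1"
      "i \<le> cut (Suc j) \<longleftrightarrow> i * h - 1 < Suc j * c"
    using cut_le_iff[of i j] cut_le_iff[of i "Suc j"] by linarith+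
  moreover have "j \<le> block_idx i \<longleftrightarrow> j * c \<le> i * h - 1"
      "block_idx i < Suc j \<longleftrightarrow> i * h - 1 < Suc j * c"
    using c_pos by (simp_all only: block_idx_def less_eq_div_iff_mult_less_eq div_less_iff_less_mult)
  ultimately show ?thesis by auto
qed

lemma weight_eq:
  assumes "cut j < i" "i \<le> cut (Suc j)"
  shows "weight i = 1 / real (block_len j)"
  using assms block_idx_iff[of i j] by (simp add: weight_def)

lemma weight_nonneg: "0 \<le> weight i"
  by (simp add: weight_def)

lemma weight_bounds: "1 / real (Suc r) \<le> weight i" "weight i \<le> 1 / real r"
  using block_len_bounds[of "block_idx i"] block_len_pos[of "block_idx i"] r_pos
  by (simp_all add: weight_def frac_le)

lemma sum_weight_block: "(\<Sum>i\<in>{cut j<..cut (Suc j)}. weight i) = 1"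
proof -
  have "(\<Sum>i\<in>{cut j<..cut (Suc j)}. weight i)
      = (\<Sum>i\<in>{cut j<..cut (Suc j)}. 1 / real (block_len j))"
    by (rule sum.cong) (auto intro: weight_eq)
  then show ?thesis
    using block_len_pos[of j] by (simp add: block_len_def)
qed

lemma sum_weight_upto_cut: "(\<Sum>i\<in>{0<..cut j}. weight i) = real j"
proof (induction j)
  case (Suc j)
  have "{0<..cut (Suc j)} = {0<..cut j} \<union> {cut j<..cut (Suc j)}"
    using cut_mono[of j "Suc j"] by (simp add: ivl_disj_un_two)
  then show ?case
    using Suc.IH sum_weight_block[of j] by (simp add: sum.union_disjoint)
qed simp

lemma block_idx_add_c:
  assumes "1 \<le> i"
  shows "block_idx (i + c) = block_idx i + h"
proof -
  have "(i + c) * h - 1 = (i * h - 1) + h * c"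
    using assms h_pos by (simp add: algebra_simps)
  then show ?thesis using c_pos by (simp add: block_idx_def)
qed

lemma weight_add_c: "1 \<le> i \<Longrightarrow> weight (i + c) = weight i"
  by (simp add: weight_def block_idx_add_c block_len_add_h)

lemma sum_weight_window:
  assumes "1 \<le> v"
  shows "(\<Sum>i\<in>{v..<v + c}. weight i) = real h"
proof -
  have "(\<Sum>i\<in>{v..<v + c}. weight i) = (\<Sum>i\<in>{1..<1 + c}. weight i)"
    using weight_add_c assms by (rule sum_periodic_window)
  also have "{1..<1 + c} = {0<..cut h}"
    by (auto simp: cut_h)
  finally show ?thesis by (simp add: sum_weight_upto_cut)
qed

lemma rstar_at_cut:
  assumes "0 < w"
  shows "rstar c h w (Suc (cut j)) (real j / real w) = block_len j"
proof -
  have "nat \<lfloor>real c / real h\<rfloor> = r"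
    by (simp add: r_def floor_divide_of_nat_eq)
  moreover have "real j / real w + 1 / real w = real (Suc j) / real w"
    by (simp add: add_divide_distrib)
  moreover have "gfun c h w (Suc (cut j) + Suc r - 1) \<le> real (Suc j) / real w
      \<longleftrightarrow> Suc (cut j + r) \<le> cut (Suc j)"
    using gfun_le_iff[OF assms c_pos, of h "Suc (cut j + r)" "Suc j"] cut_le_iff[of _ "Suc j"]
    by (simp del: of_nat_Suc)
  moreover have "Suc (cut j + r) \<le> cut (Suc j) \<longleftrightarrow> block_len j = Suc r"
    using block_len_bounds[of j] cut_mono[of j "Suc j"] by (auto simp: block_len_def)
  ultimately show ?thesis
    using block_len_bounds[of j] by (auto simp: rstar_def Let_def)
qed

lemma hrun_eq:
  assumes "0 < w"
  shows "hrun c h w j = (Suc (cut j), real j / real w)"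
proof (induction j)
  case (Suc j)
  have "Suc (cut j) + block_len j = Suc (cut (Suc j))"
    using cut_mono[of j "Suc j"] by (simp add: block_len_def)
  moreover have
    "(\<Sum>i\<in>{Suc (cut j)..<Suc (cut (Suc j))}. 1 / (real (block_len j) * real w)) = 1 / real w"
    using block_len_pos[of j] by (simp add: block_len_def)
  ultimately show ?case
    using Suc.IH rstar_at_cut[OF assms] block_len_pos[of j] by (simp add: add_divide_distrib)
qed simp

lemma block_of_iff:
  assumes "0 < w" "1 \<le> i" "i \<le> n - 2"
  shows "block_of n c h w i j \<longleftrightarrow> block_idx i = j"
proof -
  have "block_of n c h w i j \<longleftrightarrow> cut j < i \<and> i \<le> cut (Suc j)"
    using assms cut_mono[of j "Suc j"]
    by (auto simp: block_of_def hrun_eq rstar_at_cut block_len_def)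
  then show ?thesis using block_idx_iff[OF assms(2)] by simp
qed

lemma hider_y_eq:
  assumes "0 < w"
  shows "hider_y n c h w i = (if 1 \<le> i \<and> i \<le> n - 2 then weight i / real w else 0)"
proof (cases "1 \<le> i \<and> i \<le> n - 2")
  case True
  then have "block_of n c h w i = (\<lambda>j. j = block_idx i)"
    using block_of_iff[OF assms] by auto
  then show ?thesis
    using True assms by (simp add: hider_y_def hrun_eq rstar_at_cut weight_def)
qed (auto simp: hider_y_def)

end

locale floor_blocks_shift = floor_blocks +
  fixes L d :: nat
  assumes shift_eq: "L * h = d * c + 1"
begin

lemma cut_shift_le: "cut (j + d) \<le> cut j + L"
proof -
  have "(j + d) * c \<le> j * c + L * h"
    using shift_eq by (simp add: algebra_simps)
  then have "cut (j + d) \<le> (j * c + L * h) div h"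
    unfolding cut_def by (rule div_le_mono)
  then show ?thesis using h_pos by (simp add: cut_def)
qed

lemma cut_shift_eq:
  assumes "\<not> h dvd j * c"
  shows "cut (j + d) = cut j + L"
proof -
  have "1 \<le> j * c"
    using assms by (cases "j * c") auto
  then have "(j + d) * c = (j * c - 1) + L * h"
    using shift_eq by (simp add: algebra_simps)
  then show ?thesis
    using h_pos div_pred_eq_div[OF assms] by (simp add: cut_def)
qed

lemma block_len_shift_mono:
  assumes "Suc j < h"
  shows "block_len j \<le> block_len (j + d)"
proof -
  have "\<not> h dvd Suc j"
    using assms by (auto dest: dvd_imp_le)
  then have "\<not> h dvd Suc j * c"
    using coprime_dvd_mult_left_iff[OF coprime_h_c] by blast
  then have "cut (Suc j + d) = cut (Suc j) + L"
    by (rule cut_shift_eq)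
  then show ?thesis
    using cut_shift_le[of j] by (simp add: block_len_def)
qed

lemma block_idx_shift:
  assumes "1 \<le> x" "x < c"
  shows "block_idx (x + L) = block_idx x + d"
proof -
  have "\<not> c dvd x * h"
    using assms coprime_h_c
    by (auto simp: coprime_commute coprime_dvd_mult_left_iff dest: dvd_imp_le)
  moreover have "(x + L) * h - 1 = x * h + d * c"
    using shift_eq by (simp add: algebra_simps)
  ultimately show ?thesis
    using c_pos div_pred_eq_div[of c "x * h"] by (simp add: block_idx_def)
qed

lemma weight_shift_le:
  assumes "1 \<le> x" "x + r < c"
  shows "weight (x + L) \<le> weight x"
proof -
  have "x * h + c < c * h"
    using assms c_less_Suc_r_mult mult_le_mono1[of "x + Suc r" c h] by (simp add: algebra_simps)
  then have "x * h - 1 < (h - 1) * c"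
    by (simp add: algebra_simps diff_mult_distrib)
  then have "block_idx x < h - 1"
    using c_pos by (simp add: block_idx_def div_less_iff_less_mult)
  then have "Suc (block_idx x) < h"
    by linarith
  then have "block_len (block_idx x) \<le> block_len (block_idx (x + L))"
    using assms block_idx_shift block_len_shift_mono by simp
  then show ?thesis
    using block_len_pos by (simp add: weight_def frac_le)
qed

lemma sum_weight_shift_le:
  assumes "1 \<le> a" "a \<le> c"
  shows "(\<Sum>i\<in>{a..<c}. weight (i + L)) \<le> (\<Sum>i\<in>{a..c}. weight i)"
proof -
  define b where "b = c - min (c - a) r"
  have ab: "a \<le> b" "b \<le> c" "c - b \<le> r"
    using assms by (auto simp: b_def)
  have "(\<Sum>i\<in>{a..<b}. weight (i + L)) \<le> (\<Sum>i\<in>{a..<b}. weight i)"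
    using assms by (intro sum_mono weight_shift_le) (auto simp: b_def)
  moreover have "(\<Sum>i\<in>{b..<c}. weight (i + L)) \<le> real (c - b) / real r"
    using sum_bounded_above[of "{b..<c}" "\<lambda>i. weight (i + L)" "1 / real r"] weight_bounds(2) by simp
  moreover have "real (c - b) / real r \<le> real (Suc (c - b)) / real (Suc r)"
    using ab r_pos by (simp add: frac_le_eq field_simps)
  moreover have "real (Suc (c - b)) / real (Suc r) \<le> (\<Sum>i\<in>{b..c}. weight i)"
    using sum_bounded_below[of "{b..c}" "1 / real (Suc r)" weight] weight_bounds(1) ab by (simp add: add_diff_eq)
  ultimately have "(\<Sum>i\<in>{a..<b}. weight (i + L)) + (\<Sum>i\<in>{b..<c}. weight (i + L))
      \<le> (\<Sum>i\<in>{a..<b}. weight i) + (\<Sum>i\<in>{b..c}. weight i)"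
    by linarith
  moreover have "{a..<c} = {a..<b} \<union> {b..<c}" "{a..c} = {a..<b} \<union> {b..c}"
    using ab by auto
  ultimately show ?thesis
    by (simp add: sum.union_disjoint ivl_disj_int_two)
qed

end

locale coprime_hider =
  fixes n c h w :: nat
  assumes two_le_c: "2 \<le> c" and c_less_n: "c + 2 < n" and w_le: "w \<le> n - 2"
    and bezout: "h * (n - 1) = w * c + 1"
begin

lemma w_pos: "0 < w"
  using bezout c_less_n by (cases w) auto

sublocale floor_blocks_shift c h "n - 1 - c" "w - h"
proof
  show h_pos: "0 < h"
    using bezout by (cases h) auto
  have "n - 1 = Suc (n - 2)"
    using c_less_n by simp
  then have "(n - 1) * c = c + (n - 2) * c"
    by simp
  then have "h * (n - 1) < (n - 1) * c"
    using bezout w_le two_le_c mult_le_mono1[of w "n - 2" c] by linarith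
  then show "h < c"
    by (simp add: mult.commute)
  have "gcd h c dvd 1"
    using bezout by (metis dvd_add_right_iff dvd_mult gcd_dvd1 gcd_dvd2 dvd_mult2)
  then show "coprime h c"
    by (simp add: coprime_iff_gcd_eq_1)
  have "h * (c + 2) \<le> h * (n - 1)"
    using c_less_n by (intro mult_le_mono2) simp
  then have "h * c + 2 * h \<le> w * c + 1"
    unfolding bezout by (simp add: algebra_simps)
  then have "h * c \<le> w * c"
    using h_pos by linarith
  moreover have "(n - 1 - c) * h = h * (n - 1) - h * c"
    by (metis diff_mult_distrib mult.commute)
  moreover have "(w - h) * c = w * c - h * c"
    by (rule diff_mult_distrib)
  ultimately show "(n - 1 - c) * h = (w - h) * c + 1"
    using bezout by linarith
qed

lemmas hider_y_eq_weight = hider_y_eq[OF w_pos]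

lemma sum_CT_le_of_subset:
  assumes "finite A" "CT n c v \<subseteq> A \<union> {0, n - 1}"
  shows "(\<Sum>i\<in>CT n c v. hider_y n c h w i) \<le> (\<Sum>i\<in>A. hider_y n c h w i)"
proof -
  have "(\<Sum>i\<in>CT n c v. hider_y n c h w i) \<le> (\<Sum>i\<in>A \<union> {0, n - 1}. hider_y n c h w i)"
    using assms by (intro sum_mono2) (auto simp: hider_y_eq_weight weight_nonneg)
  also have "\<dots> = (\<Sum>i\<in>A. hider_y n c h w i)"
    using assms(1) c_less_n by (intro sum.mono_neutral_right) (auto simp: hider_y_eq_weight)
  finally show ?thesis .
qed

lemma sum_hider_y_inner:
  assumes "A \<subseteq> {1..n - 2}"
  shows "(\<Sum>i\<in>A. hider_y n c h w i) = (\<Sum>i\<in>A. weight i) / real w"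
  using assms by (auto simp: hider_y_eq_weight sum_divide_distrib intro!: sum.cong)

lemma sum_hider_y_window:
  assumes "1 \<le> v" "v + c < n"
  shows "(\<Sum>i\<in>{v..<v + c}. hider_y n c h w i) = real h / real w"
proof -
  have "{v..<v + c} \<subseteq> {1..n - 2}"
    using assms by auto
  then show ?thesis
    using assms sum_hider_y_inner sum_weight_window by simp
qed

lemma sum_hider_y_wrap_le:
  assumes "n \<le> v + c" "v < n"
  shows "(\<Sum>i\<in>{v..<n - 1} \<union> {1..<v + Suc c - n}. hider_y n c h w i) \<le> real h / real w"
proof -
  define a where "a = v + Suc c - n"
  have a: "1 \<le> a" "a \<le> c" "a \<le> v" "v = a + (n - 1 - c)" "n - 1 = c + (n - 1 - c)"
    using assms c_less_n by (auto simp: a_def)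
  have "(\<Sum>i\<in>{v..<n - 1}. weight i) = (\<Sum>i\<in>{a..<c}. weight (i + (n - 1 - c)))"
    using a(4,5) sum.shift_bounds_nat_ivl[of weight a "n - 1 - c" c] by simp
  also have "\<dots> \<le> (\<Sum>i\<in>{a..c}. weight i)"
    using a(1,2) by (rule sum_weight_shift_le)
  finally have "(\<Sum>i\<in>{1..<a}. weight i) + (\<Sum>i\<in>{v..<n - 1}. weight i)
      \<le> (\<Sum>i\<in>{1..<1 + c}. weight i)"
    using a sum.atLeastLessThan_concat[of 1 a "Suc c" weight] by (simp add: atLeastLessThanSuc_atLeastAtMost)
  moreover have "(\<Sum>i\<in>{v..<n - 1} \<union> {1..<a}. hider_y n c h w i)
      = ((\<Sum>i\<in>{1..<a}. weight i) + (\<Sum>i\<in>{v..<n - 1}. weight i)) / real w"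
    using a by (subst sum_hider_y_inner) (auto simp: sum.union_disjoint add_divide_distrib)
  ultimately show ?thesis
    using sum_weight_window[of 1] w_pos by (simp add: a_def divide_right_mono)
qed

lemma sum_hider_y_CT_le:
  assumes "v < n"
  shows "(\<Sum>i\<in>CT n c v. hider_y n c h w i) \<le> real h / real w"
proof -
  consider "v = 0" | "1 \<le> v" "v + c < n" | "n \<le> v + c"
    by linarith
  then show ?thesis
  proof cases
    case 1
    have "CT n c v \<subseteq> {1..<1 + c} \<union> {0, n - 1}"
      using 1 CT_subset[of n c v] c_less_n by (auto simp: cyc_interval_eq)
    then have "(\<Sum>i\<in>CT n c v. hider_y n c h w i) \<le> (\<Sum>i\<in>{1..<1 + c}. hider_y n c h w i)"
      by (intro sum_CT_le_of_subset) auto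
    then show ?thesis
      using sum_hider_y_window[of 1] c_less_n by simp
  next
    case 2
    then have "CT n c v \<subseteq> {v..<v + c} \<union> {0, n - 1}"
      using CT_subset_window by blast
    then have "(\<Sum>i\<in>CT n c v. hider_y n c h w i) \<le> (\<Sum>i\<in>{v..<v + c}. hider_y n c h w i)"
      by (intro sum_CT_le_of_subset) auto
    then show ?thesis
      using 2 sum_hider_y_window by simp
  next
    case 3
    have "CT n c v \<subseteq> {v..<n} \<union> {..<v + Suc c - n}"
      using CT_subset[of n c v] cyc_interval_subset_wrap[of v n "Suc c"] assms c_less_n by simp
    also have "\<dots> \<subseteq> ({v..<n - 1} \<union> {1..<v + Suc c - n}) \<union> {0, n - 1}"
      by auto
    finally have "CT n c v \<subseteq> ({v..<n - 1} \<union> {1..<v + Suc c - n}) \<union> {0, n - 1}" .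
    then have "(\<Sum>i\<in>CT n c v. hider_y n c h w i)
        \<le> (\<Sum>i\<in>{v..<n - 1} \<union> {1..<v + Suc c - n}. hider_y n c h w i)"
      by (intro sum_CT_le_of_subset) auto
    also have "\<dots> \<le> real h / real w"
      using 3 assms by (rule sum_hider_y_wrap_le)
    finally show ?thesis .
  qed
qed

end

theorem lemma3p8:
  fixes k n c h w :: nat
  assumes "k \<ge> 2" and "n > 2 ^ k" and "c = 2 ^ k - 2"
    and "gcd c (n - 1) = 1"
    and "h > 0" and "w \<in> {1..n-2}"
    and "int h * int (n - 1) - int w * int c = 1"
    and "\<And>h' w'. h' > 0 \<Longrightarrow> w' \<in> {1..n-2} \<Longrightarrow>
            int h' * int (n - 1) - int w' * int c = 1 \<Longrightarrow> w \<le> w'"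
  shows "\<forall>v \<in> {0..<n} - {1}.
           (\<Sum>i\<in>CT n c v. hider_y n c h w i) \<le> real h / real w"
proof -
  have "(4::nat) \<le> 2 ^ k"
    using power_increasing[of 2 k "2::nat"] assms(1) by simp
  then have "2 \<le> c" "c + 2 < n"
    using assms(2,3) by simp_all
  moreover have "w \<le> n - 2"
    using assms(6) by simp
  moreover have "h * (n - 1) = w * c + 1"
    using assms(7) by (simp flip: of_nat_mult)
  ultimately interpret coprime_hider n c h w
    by unfold_locales
  show ?thesis
    using sum_hider_y_CT_le by simp
qed

end
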